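(* Let $n\in\mathbb{N}$, $\hbar\in{]0,\infty[}$, $\mu\in\mathbb{R}$, $k,\ell\in\mathbb{N}_0$ and $g\in\mathscr{P}^{\ell,\ell}(\mathbb{C}^{1+n})$. Then $\mathcal{J}^kg-\hbar^k\big(\tfrac{\mu}{\hbar}-\ell\big)_{\downarrow,k}\,g\in\langle\mathcal{J}-\mu\rangle$, where $\mathcal{J}^kg$ is the pointwise product and $\langle\mathcal{J}-\mu\rangle$ is the $^*$-ideal of $(\bigoplus_m\mathscr{P}^{m,m}(\mathbb{C}^{1+n}),\star_\hbar)$ generated by $\mathcal{J}-\mu\mathbb{1}$.
   Context: $\mathscr{P}^{k,\ell}(\mathbb{C}^{1+n})$ is the span of monomials $z^K\overline{z}^L$ with $K,L\in\mathbb{N}_0^{1+n}$, $|K|=k$, $|L|=\ell$. Wick product: $f\star_\hbar g=\sum_{K}\frac{\hbar^{|K|}}{K!}\frac{\partial^{|K|}f}{\partial\overline{z}^K}\frac{\partial^{|K|}g}{\partial z^K}$ ($K!=\prod K_i!$), involution pointwise complex conjugation. $\mathcal{J}=\sum_{j=0}^nz_j\overline{z_j}$. Falling factorial: $(x)_{\downarrow,k}=\prod_{j=0}^{k-1}(x-j)$. *)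

theory Defs
  imports "HOL-Analysis.Analysis" "HOL-Library.Poly_Mapping"
begin

text \<open>Polynomials in z_0..z_n and their conjugates: a polynomial is the finitely
 supported map sending (K,L) to the coefficient of z^K zbar^L.\<close>

type_synonym mexp = "nat \<Rightarrow>\<^sub>0 nat"
type_synonym cpoly = "(mexp \<times> mexp) \<Rightarrow>\<^sub>0 complex"

definition ffall :: "'a::comm_ring_1 \<Rightarrow> nat \<Rightarrow> 'a" where
  "ffall x k = (\<Prod>j<k. x - of_nat j)"

definition mdeg :: "mexp \<Rightarrow> nat" where
  "mdeg K = (\<Sum>i\<in>Poly_Mapping.keys K. Poly_Mapping.lookup K i)"

definition mfact :: "mexp \<Rightarrow> nat" where
  "mfact K = (\<Prod>i\<in>Poly_Mapping.keys K. fact (Poly_Mapping.lookup K i))"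

text \<open>coefficient of d^K/dx^K applied to x^B (then times x^(B-K)); zero unless K \<le> B\<close>
definition dcoef :: "mexp \<Rightarrow> mexp \<Rightarrow> complex" where
  "dcoef K B = (\<Prod>i\<in>Poly_Mapping.keys K.
                  ffall (of_nat (Poly_Mapping.lookup B i)) (Poly_Mapping.lookup K i))"

definition pscale :: "complex \<Rightarrow> cpoly \<Rightarrow> cpoly" where
  "pscale c p = Poly_Mapping.map (\<lambda>v. c * v) p"

definition dzbar :: "mexp \<Rightarrow> cpoly \<Rightarrow> cpoly" where
  "dzbar K p = (\<Sum>AB\<in>Poly_Mapping.keys p.
     Poly_Mapping.single (fst AB, snd AB - K) (dcoef K (snd AB) * Poly_Mapping.lookup p AB))"

definition dz :: "mexp \<Rightarrow> cpoly \<Rightarrow> cpoly" where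
  "dz K p = (\<Sum>AB\<in>Poly_Mapping.keys p.
     Poly_Mapping.single (fst AB - K, snd AB) (dcoef K (fst AB) * Poly_Mapping.lookup p AB))"

text \<open>Wick product; the product of polynomials (*) is the pointwise product of
 the polynomial functions (convolution of coefficients).\<close>
definition wick :: "real \<Rightarrow> cpoly \<Rightarrow> cpoly \<Rightarrow> cpoly" where
  "wick hb f g = Sum_any (\<lambda>K. pscale (complex_of_real (hb ^ mdeg K) / of_nat (mfact K))
                                   (dzbar K f * dz K g))"

definition pconj :: "cpoly \<Rightarrow> cpoly" where
  "pconj p = (\<Sum>AB\<in>Poly_Mapping.keys p.
     Poly_Mapping.single (snd AB, fst AB) (cnj (Poly_Mapping.lookup p AB)))"

text \<open>polynomials on C^(1+n): only variables 0..n occur\<close>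
definition Pkl :: "nat \<Rightarrow> nat \<Rightarrow> nat \<Rightarrow> cpoly set" where
  "Pkl n k l = {p. \<forall>AB\<in>Poly_Mapping.keys p.
       Poly_Mapping.keys (fst AB) \<subseteq> {..n} \<and> Poly_Mapping.keys (snd AB) \<subseteq> {..n} \<and>
       mdeg (fst AB) = k \<and> mdeg (snd AB) = l}"

text \<open>the algebra: direct sum over m of P^{m,m}\<close>
definition Alg :: "nat \<Rightarrow> cpoly set" where
  "Alg n = {p. \<forall>AB\<in>Poly_Mapping.keys p.
       Poly_Mapping.keys (fst AB) \<subseteq> {..n} \<and> Poly_Mapping.keys (snd AB) \<subseteq> {..n} \<and>
       mdeg (fst AB) = mdeg (snd AB)}"

definition Jpoly :: "nat \<Rightarrow> cpoly" where
  "Jpoly n = (\<Sum>j\<le>n. Poly_Mapping.single (Poly_Mapping.single j 1, Poly_Mapping.single j 1) 1)"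

inductive_set star_ideal :: "nat \<Rightarrow> real \<Rightarrow> cpoly set \<Rightarrow> cpoly set"
  for n :: nat and hb :: real and S :: "cpoly set" where
  gen: "x \<in> S \<Longrightarrow> x \<in> star_ideal n hb S"
| zero: "0 \<in> star_ideal n hb S"
| add: "x \<in> star_ideal n hb S \<Longrightarrow> y \<in> star_ideal n hb S \<Longrightarrow> x + y \<in> star_ideal n hb S"
| scale: "x \<in> star_ideal n hb S \<Longrightarrow> pscale c x \<in> star_ideal n hb S"
| left: "x \<in> star_ideal n hb S \<Longrightarrow> a \<in> Alg n \<Longrightarrow> wick hb a x \<in> star_ideal n hb S"
| right: "x \<in> star_ideal n hb S \<Longrightarrow> a \<in> Alg n \<Longrightarrow> wick hb x a \<in> star_ideal n hb S"
| conj: "x \<in> star_ideal n hb S \<Longrightarrow> pconj x \<in> star_ideal n hb S"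

end

theory Submission
  imports Defs
begin

text \<open>Since \<open>J - \<mu>\<close> has degree at most one in the conjugate variables, only the terms
  \<open>K = 0\<close> and \<open>K = e_j\<close> survive in the Wick product \<open>(J - \<mu>) \<star> g\<close>, and Euler's identity
  \<open>\<Sum>_j z_j \<partial>g/\<partial>z_j = l g\<close> for \<open>g \<in> P^{l,l}\<close> turns it into \<open>(J - \<mu> + hb l) g\<close>.
  So \<open>J g \<equiv> (\<mu> - hb l) g\<close> modulo the ideal, and since \<open>J g \<in> P^{l+1,l+1}\<close>, induction on \<open>k\<close>
  gives \<open>J^k g \<equiv> \<Prod>_{i<k} (\<mu> - hb (l + i)) g = hb^k (\<mu>/hb - l)_{\<down>,k} g\<close>.\<close>

text \<open>The multi-index \<open>e\<^sub>j\<close> is written with \<open>Suc 0\<close>, the simp normal form of \<open>1::nat\<close>,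
  so that lemmas about it work as rewrite rules.\<close>

abbreviation unit_mexp :: "nat \<Rightarrow> mexp" where
  "unit_mexp j \<equiv> Poly_Mapping.single j (Suc 0)"

lemma unit_mexp_eq_iff [simp]: "unit_mexp i = unit_mexp j \<longleftrightarrow> i = j"
  by (metis lookup_single_eq lookup_single_not_eq nat.distinct(1))

lemma unit_mexp_neq_zero [simp]: "unit_mexp j \<noteq> 0"
  by (metis lookup_single_eq lookup_zero nat.distinct(1))

lemma mdeg_superset:
  assumes "finite S" and "Poly_Mapping.keys K \<subseteq> S"
  shows "mdeg K = (\<Sum>i\<in>S. Poly_Mapping.lookup K i)"
  unfolding mdeg_def by (rule sum.mono_neutral_left) (use assms in \<open>auto simp: in_keys_iff\<close>)

lemma mdeg_add: "mdeg (A + B) = mdeg A + mdeg B"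
  unfolding mdeg_def
  by (rule setsum_keys_plus_distrib) (simp_all add: lookup_add)

lemma unit_mexp_add_diff_cancel:
  assumes "Poly_Mapping.lookup A j \<noteq> 0"
  shows "unit_mexp j + (A - unit_mexp j) = A"
  by (rule poly_mapping_eqI)
    (use assms in \<open>auto simp: lookup_add lookup_minus lookup_single when_def\<close>)

lemma pscale_conv_mult: "pscale c p = Poly_Mapping.single 0 c * p"
  unfolding pscale_def by (rule mult_map_scale_conv_mult)

lemma pscale_one [simp]: "pscale 1 p = p"
  by (simp add: pscale_conv_mult)

definition map_weighted :: "('a \<Rightarrow> 'b) \<Rightarrow> ('a \<Rightarrow> 'c::semiring_0) \<Rightarrow> ('a \<Rightarrow>\<^sub>0 'c) \<Rightarrow> ('b \<Rightarrow>\<^sub>0 'c)" where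
  "map_weighted \<phi> w p =
     (\<Sum>a\<in>Poly_Mapping.keys p. Poly_Mapping.single (\<phi> a) (w a * Poly_Mapping.lookup p a))"

lemma map_weighted_zero [simp]: "map_weighted \<phi> w 0 = 0"
  by (simp add: map_weighted_def)

lemma map_weighted_single [simp]:
  "map_weighted \<phi> w (Poly_Mapping.single a c) = Poly_Mapping.single (\<phi> a) (w a * c)"
  by (cases "c = 0") (simp_all add: map_weighted_def)

lemma map_weighted_add: "map_weighted \<phi> w (p + q) = map_weighted \<phi> w p + map_weighted \<phi> w q"
  unfolding map_weighted_def
  by (rule setsum_keys_plus_distrib) (simp_all add: distrib_left single_add)

lemma map_weighted_diff:
  fixes p q :: "'a \<Rightarrow>\<^sub>0 'c::ring"
  shows "map_weighted \<phi> w (p - q) = map_weighted \<phi> w p - map_weighted \<phi> w q"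
  using map_weighted_add[of \<phi> w "p - q" q] by (simp add: algebra_simps)

lemma map_weighted_sum: "map_weighted \<phi> w (\<Sum>i\<in>I. f i) = (\<Sum>i\<in>I. map_weighted \<phi> w (f i))"
  by (induction I rule: infinite_finite_induct) (simp_all add: map_weighted_add)

lemma map_weighted_sum_weights:
  "map_weighted \<phi> (\<lambda>a. \<Sum>i\<in>I. w i a) p = (\<Sum>i\<in>I. map_weighted \<phi> (w i) p)"
  by (rule poly_mapping_eqI)
    (simp add: map_weighted_def lookup_sum lookup_single when_def sum_distrib_right sum.swap[of _ I]
      sum.If_cases)

lemma map_weighted_cong:
  assumes "\<And>a. a \<in> Poly_Mapping.keys p \<Longrightarrow> w a = w' a"
    and "\<And>a. a \<in> Poly_Mapping.keys p \<Longrightarrow> w a \<noteq> 0 \<Longrightarrow> \<phi> a = \<phi>' a"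
  shows "map_weighted \<phi> w p = map_weighted \<phi>' w' p"
  unfolding map_weighted_def
  by (rule sum.cong) (use assms in \<open>force+\<close>)

lemma single_mult_map_weighted:
  fixes p :: "'a::comm_monoid_add \<Rightarrow>\<^sub>0 'c::semiring_0"
  shows "Poly_Mapping.single b d * map_weighted \<phi> w p = map_weighted (\<lambda>a. b + \<phi> a) (\<lambda>a. d * w a) p"
  by (simp add: map_weighted_def sum_distrib_left mult_single mult.assoc)

lemma map_weighted_id_one:
  fixes p :: "'a \<Rightarrow>\<^sub>0 'c::semiring_1"
  shows "map_weighted (\<lambda>a. a) (\<lambda>_. 1) p = p"
  by (rule poly_mapping_eqI) (simp add: map_weighted_def lookup_sum lookup_single when_def in_keys_iff)

lemma map_weighted_id_const:
  fixes p :: "'a::comm_monoid_add \<Rightarrow>\<^sub>0 'c::semiring_1"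
  shows "map_weighted (\<lambda>a. a) (\<lambda>_. c) p = Poly_Mapping.single 0 c * p"
  using single_mult_map_weighted[of 0 c "\<lambda>a. a" "\<lambda>_. 1" p] by (simp add: map_weighted_id_one)

lemma dzbar_conv_map_weighted:
  "dzbar K = map_weighted (\<lambda>AB. (fst AB, snd AB - K)) (\<lambda>AB. dcoef K (snd AB))"
  by (simp add: fun_eq_iff dzbar_def map_weighted_def)

lemma dz_conv_map_weighted:
  "dz K = map_weighted (\<lambda>AB. (fst AB - K, snd AB)) (\<lambda>AB. dcoef K (fst AB))"
  by (simp add: fun_eq_iff dz_def map_weighted_def)

lemma ffall_of_nat_eq_0_iff:
  "ffall (of_nat b :: 'a::{idom, ring_char_0}) k = 0 \<longleftrightarrow> b < k"
  by (auto simp: ffall_def)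

lemma dcoef_eq_0_iff:
  "dcoef K B = 0 \<longleftrightarrow> (\<exists>i. Poly_Mapping.lookup B i < Poly_Mapping.lookup K i)"
  by (auto simp: dcoef_def ffall_of_nat_eq_0_iff in_keys_iff)

lemma dcoef_zero [simp]: "dcoef 0 B = 1"
  by (simp add: dcoef_def)

lemma dcoef_unit_mexp: "dcoef (unit_mexp j) B = of_nat (Poly_Mapping.lookup B j)"
  by (simp add: dcoef_def ffall_def)

lemma le_unit_mexp_imp_eq:
  assumes "K \<noteq> 0" and "\<And>i. Poly_Mapping.lookup K i \<le> Poly_Mapping.lookup (unit_mexp j) i"
  shows "K = unit_mexp j"
proof -
  have other: "Poly_Mapping.lookup K i = 0" if "i \<noteq> j" for i
    using assms(2)[of i] that by (simp add: lookup_single_not_eq)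
  then have "Poly_Mapping.lookup K j \<noteq> 0"
    using assms(1) by (metis lookup_zero poly_mapping_eqI)
  then have "Poly_Mapping.lookup K j = Suc 0"
    using assms(2)[of j] by simp
  with other show ?thesis
    by (intro poly_mapping_eqI) (auto simp: lookup_single when_def)
qed

lemma dcoef_at_unit_mexp:
  assumes "K \<noteq> 0"
  shows "dcoef K (unit_mexp j) = (if K = unit_mexp j then 1 else 0)"
  using le_unit_mexp_imp_eq[OF assms, of j] dcoef_eq_0_iff[of K "unit_mexp j"]
  by (auto simp: dcoef_unit_mexp not_less)

lemma dzbar_zero [simp]: "dzbar 0 p = p"
  by (simp add: dzbar_conv_map_weighted map_weighted_id_one)

lemma dz_zero [simp]: "dz 0 p = p"
  by (simp add: dz_conv_map_weighted map_weighted_id_one)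

lemma Jpoly_minus_const_eq:
  "Jpoly n - pscale c 1 =
     (\<Sum>j\<le>n. Poly_Mapping.single (unit_mexp j, unit_mexp j) 1) - Poly_Mapping.single 0 c"
  by (simp add: Jpoly_def pscale_conv_mult)

lemma dzbar_Jpoly_minus_const:
  assumes "K \<noteq> 0"
  shows "dzbar K (Jpoly n - pscale c 1) =
           (if K \<in> unit_mexp ` {..n} then Poly_Mapping.single (K, 0) 1 else 0)"
proof -
  have "dcoef K 0 = 0"
    using assms dcoef_eq_0_iff by (metis lookup_zero neq0_conv poly_mapping_eqI)
  then have "dzbar K (Jpoly n - pscale c 1) =
      (\<Sum>j\<le>n. if K = unit_mexp j then Poly_Mapping.single (K, 0) 1 else 0)"
    by (simp add: Jpoly_minus_const_eq dzbar_conv_map_weighted map_weighted_diff map_weighted_sum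
        dcoef_at_unit_mexp[OF assms] zero_prod_def if_distrib[of "Poly_Mapping.single _"] cong: if_cong)
  also have "\<dots> = (if K \<in> unit_mexp ` {..n} then Poly_Mapping.single (K, 0) 1 else 0)"
    by (auto intro!: sum.neutral)
  finally show ?thesis .
qed

lemma z_mult_dz_unit_mexp:
  "Poly_Mapping.single (unit_mexp j, 0) 1 * dz (unit_mexp j) p =
     map_weighted (\<lambda>AB. AB) (\<lambda>AB. of_nat (Poly_Mapping.lookup (fst AB) j)) p"
proof -
  have "Poly_Mapping.single (unit_mexp j, 0) 1 * dz (unit_mexp j) p =
      map_weighted (\<lambda>AB. (unit_mexp j, 0) + (fst AB - unit_mexp j, snd AB))
        (\<lambda>AB. 1 * dcoef (unit_mexp j) (fst AB)) p"
    by (simp only: dz_conv_map_weighted single_mult_map_weighted)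
  also have "\<dots> = map_weighted (\<lambda>AB. AB) (\<lambda>AB. of_nat (Poly_Mapping.lookup (fst AB) j)) p"
    by (rule map_weighted_cong)
      (auto simp: dcoef_unit_mexp unit_mexp_add_diff_cancel prod_eq_iff)
  finally show ?thesis .
qed

lemma euler_identity_dz:
  assumes "p \<in> Pkl n k l"
  shows "(\<Sum>j\<le>n. Poly_Mapping.single (unit_mexp j, 0) 1 * dz (unit_mexp j) p) = pscale (of_nat k) p"
proof -
  have degree: "(\<Sum>j\<le>n. of_nat (Poly_Mapping.lookup (fst AB) j)) = (of_nat k :: complex)"
    if "AB \<in> Poly_Mapping.keys p" for AB
    using assms that mdeg_superset[of "{..n}" "fst AB"] by (auto simp: Pkl_def simp flip: of_nat_sum)
  have "(\<Sum>j\<le>n. Poly_Mapping.single (unit_mexp j, 0) 1 * dz (unit_mexp j) p) =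
      map_weighted (\<lambda>AB. AB) (\<lambda>AB. \<Sum>j\<le>n. of_nat (Poly_Mapping.lookup (fst AB) j)) p"
    by (simp only: z_mult_dz_unit_mexp map_weighted_sum_weights)
  also have "\<dots> = map_weighted (\<lambda>AB. AB) (\<lambda>_. of_nat k) p"
    by (rule map_weighted_cong) (simp_all add: degree)
  finally show ?thesis
    by (simp only: map_weighted_id_const pscale_conv_mult)
qed

lemma wick_Jpoly_minus_const:
  assumes "p \<in> Pkl n k l"
  shows "wick hb (Jpoly n - pscale c 1) p =
           (Jpoly n - pscale c 1) * p + pscale (of_real (hb * real k)) p"
proof -
  define f where "f = Jpoly n - pscale c 1"
  define T where "T K = pscale (of_real (hb ^ mdeg K) / of_nat (mfact K)) (dzbar K f * dz K p)" for K
  have T_vanishes: "T K = 0" if "K \<notin> insert 0 (unit_mexp ` {..n})" for K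
    using that dzbar_Jpoly_minus_const[of K n c] by (simp add: T_def f_def pscale_conv_mult)
  have T_unit_mexp: "T (unit_mexp j) =
      pscale (of_real hb) (Poly_Mapping.single (unit_mexp j, 0) 1 * dz (unit_mexp j) p)"
    if "j \<le> n" for j
    using that dzbar_Jpoly_minus_const[of "unit_mexp j" n c]
    by (simp add: T_def f_def mdeg_def mfact_def)
  have "wick hb f p = Sum_any T"
    by (simp add: wick_def T_def)
  also have "\<dots> = sum T (insert 0 (unit_mexp ` {..n}))"
    by (rule Sum_any.expand_superset) (use T_vanishes in auto)
  also have "\<dots> = T 0 + (\<Sum>K\<in>unit_mexp ` {..n}. T K)"
    by (rule sum.insert) auto
  also have "(\<Sum>K\<in>unit_mexp ` {..n}. T K) = (\<Sum>j\<le>n. T (unit_mexp j))"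
    by (rule sum.reindex_cong[of unit_mexp]) (auto simp: inj_on_def)
  also have "\<dots> = pscale (of_real hb)
      (\<Sum>j\<le>n. Poly_Mapping.single (unit_mexp j, 0) 1 * dz (unit_mexp j) p)"
    by (simp add: T_unit_mexp pscale_conv_mult sum_distrib_left)
  also have "\<dots> = pscale (of_real (hb * real k)) p"
    by (simp add: euler_identity_dz[OF assms] pscale_conv_mult mult_single del: single_of_nat flip: mult.assoc)
  also have "T 0 = f * p"
    by (simp add: T_def mdeg_def mfact_def)
  finally show ?thesis
    by (simp add: f_def)
qed

lemma keys_Jpoly: "Poly_Mapping.keys (Jpoly n) \<subseteq> (\<lambda>j. (unit_mexp j, unit_mexp j)) ` {..n}"
  using keys_sum[of "\<lambda>j. Poly_Mapping.single (unit_mexp j, unit_mexp j) (1::complex)" "{..n}"]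
  by (auto simp: Jpoly_def)

lemma Jpoly_mult_Pkl:
  assumes "p \<in> Pkl n k l"
  shows "Jpoly n * p \<in> Pkl n (Suc k) (Suc l)"
  unfolding Pkl_def
proof (intro CollectI ballI)
  fix AB
  assume "AB \<in> Poly_Mapping.keys (Jpoly n * p)"
  then obtain j CD where j: "j \<le> n" and CD: "CD \<in> Poly_Mapping.keys p"
    and AB: "AB = (unit_mexp j + fst CD, unit_mexp j + snd CD)"
    using keys_mult[of "Jpoly n" p] keys_Jpoly[of n] by (fastforce simp: plus_prod_def)
  have "Poly_Mapping.keys (unit_mexp j + C) \<subseteq> {..n}" if "Poly_Mapping.keys C \<subseteq> {..n}" for C
    using keys_add[of "unit_mexp j" C] that j by auto
  moreover have "mdeg (unit_mexp j + C) = Suc (mdeg C)" for C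
    by (simp only: mdeg_add) (simp add: mdeg_def)
  ultimately show "Poly_Mapping.keys (fst AB) \<subseteq> {..n} \<and> Poly_Mapping.keys (snd AB) \<subseteq> {..n} \<and>
      mdeg (fst AB) = Suc k \<and> mdeg (snd AB) = Suc l"
    using assms CD by (auto simp: AB Pkl_def)
qed

lemma Pkl_subset_Alg: "Pkl n l l \<subseteq> Alg n"
  by (auto simp: Pkl_def Alg_def)

lemma Jpoly_mult_minus_scale_in_star_ideal:
  assumes "p \<in> Pkl n l l"
  shows "Jpoly n * p - pscale (of_real (\<mu> - hb * real l)) p
           \<in> star_ideal n hb {Jpoly n - pscale (of_real \<mu>) 1}"
proof -
  have "wick hb (Jpoly n - pscale (of_real \<mu>) 1) p = Jpoly n * p - pscale (of_real (\<mu> - hb * real l)) p"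
    unfolding wick_Jpoly_minus_const[OF assms] by (simp add: pscale_conv_mult single_diff algebra_simps)
  moreover have "wick hb (Jpoly n - pscale (of_real \<mu>) 1) p \<in> star_ideal n hb {Jpoly n - pscale (of_real \<mu>) 1}"
    using assms Pkl_subset_Alg by (blast intro: star_ideal.right star_ideal.gen)
  ultimately show ?thesis
    by simp
qed

lemma ffall_Suc: "ffall x (Suc k) = x * ffall (x - 1) k"
  unfolding ffall_def prod.lessThan_Suc_shift by (simp add: algebra_simps)

lemma scaled_ffall_Suc:
  fixes hb :: real
  assumes "hb \<noteq> 0"
  shows "hb ^ Suc k * ffall (\<mu> / hb - real l) (Suc k) =
           (\<mu> - hb * real l) * (hb ^ k * ffall (\<mu> / hb - real (Suc l)) k)"
  using assms by (simp add: ffall_Suc field_simps)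

theorem lemma4p9:
  fixes n k l :: nat and hb \<mu> :: real and g :: cpoly
  assumes "n \<ge> 1" and "hb > 0" and "g \<in> Pkl n l l"
  shows "Jpoly n ^ k * g - pscale (complex_of_real (hb ^ k * ffall (\<mu> / hb - real l) k)) g
           \<in> star_ideal n hb {Jpoly n - pscale (complex_of_real \<mu>) 1}"
  using assms(3)
proof (induction k arbitrary: l g)
  case 0
  then show ?case
    by (simp add: ffall_def star_ideal.zero)
next
  case (Suc k)
  let ?I = "star_ideal n hb {Jpoly n - pscale (complex_of_real \<mu>) 1}"
  define c where "c = hb ^ k * ffall (\<mu> / hb - real (Suc l)) k"
  have shifted: "Jpoly n ^ k * (Jpoly n * g) - pscale (of_real c) (Jpoly n * g) \<in> ?I"
    unfolding c_def by (rule Suc.IH[OF Jpoly_mult_Pkl[OF Suc.prems]])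
  have eigen: "Jpoly n * g - pscale (of_real (\<mu> - hb * real l)) g \<in> ?I"
    by (rule Jpoly_mult_minus_scale_in_star_ideal[OF Suc.prems])
  have decomposition: "Jpoly n ^ Suc k * g - pscale (of_real (hb ^ Suc k * ffall (\<mu> / hb - real l) (Suc k))) g =
      (Jpoly n ^ k * (Jpoly n * g) - pscale (of_real c) (Jpoly n * g)) +
      pscale (of_real c) (Jpoly n * g - pscale (of_real (\<mu> - hb * real l)) g)"
    unfolding scaled_ffall_Suc[OF less_imp_neq[OF assms(2), symmetric]] c_def[symmetric] of_real_mult
    by (simp add: pscale_conv_mult algebra_simps mult_single[of 0, simplified, symmetric]
        del: single_of_nat of_real_diff)
  show ?case
    unfolding decomposition by (intro star_ideal.add star_ideal.scale shifted eigen)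
qed

end
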